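(* Let $\varepsilon\ge0$ and let $\phi:\mathcal{B}\to\mathcal{C}\subseteq\mathcal{B}$ satisfy both $\|\phi(b)-b\|_1\le\varepsilon$ for all $b$ and $\phi(b_1)=\phi(b_2)\Rightarrow\|b_1-b_2\|_1\le\varepsilon$. Let $\{p_c\}_{c\in\mathcal{C}}$ be any family of distributions with $p_c$ supported on $\phi^{-1}(c)$. Let $\pi:\mathcal{B}\to\Delta(\mathcal{A})$ satisfy $\|\pi(b_1)-\pi(b_2)\|_1\le L_\pi\|b_1-b_2\|_1$ (local stability), and assume $V^{[\pi_\phi]_{\rm true}}_{\rm true}$ is $L_V$-Lipschitz on $\mathcal{B}$ with respect to $\|\cdot\|_1$ (value stability). Then $$\big\|V^\pi_{\rm true}-[V^{\pi_\phi}_{\rm bin}]_{\rm true}\big\|_\infty\le L^{[1]}_\phi\,\varepsilon,\qquad L^{[1]}_\phi:=\frac{(L_\pi+1)R_{\max}+2L_V}{1-\gamma}+\frac{\gamma R_{\max}L_\pi+R_{\max}}{(1-\gamma)^2}.$$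
   Context: Finite POMDP with finite $\mathcal{S},\mathcal{A},\mathcal{O}$, transition $\mathbb{T}$, emission $\mathbb{O}$, reward $r:\mathcal{S}\times\mathcal{A}\to[0,R_{\max}]$, discount $\gamma\in[0,1)$. $P(o\mid b,a)=\sum_{s,s'}b(s)\mathbb{T}(s'\mid s,a)\mathbb{O}(o\mid s')$, $b^{o,a}(s')\propto\sum_s b(s)\mathbb{T}(s'\mid s,a)\mathbb{O}(o\mid s')$; $\mathcal{B}\subseteq\Delta(\mathcal{S})$ is the countable set of reachable beliefs. True system: belief MDP on $\mathcal{B}$ with reward $r(b,a)=\sum_s b(s)r(s,a)$ and transitions $b\mapsto b^{o,a}$ w.p. $P(o\mid b,a)$; $V^\pi_{\rm true}(b)=\mathbb{E}[\sum_{t\ge0}\gamma^tr(b_t,a_t)\mid b_0=b]$. Abstract system: MDP on $\mathcal{C}$ with reward $r_\phi(c,a)=\sum_b p_c(b)r(b,a)$ and transitions $P_\phi(c'\mid c,a)=\sum_bp_c(b)\sum_{o:\phi(b^{o,a})=c'}P(o\mid b,a)$. Abstract policy $\pi_\phi(c):=\pi(c)$ with abstract value $V^{\pi_\phi}_{\rm bin}$. Lifts: $[V_{\rm bin}]_{\rm true}(b)=V_{\rm bin}(\phi(b))$, $[\pi_\phi]_{\rm true}(b)=\pi_\phi(\phi(b))$. *)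

theory Defs
  imports "HOL-Analysis.Analysis"
begin

text \<open>Beliefs are functions 's => real; a belief is a distribution if it is
nonnegative and sums to 1. Transition T s a s' = T(s'|s,a), emission Ob s' ob = O(ob|s').\<close>

definition is_dist :: "('x::finite \<Rightarrow> real) \<Rightarrow> bool" where
  "is_dist b \<longleftrightarrow> (\<forall>x. 0 \<le> b x) \<and> (\<Sum>x\<in>UNIV. b x) = 1"

definition l1dist :: "('x::finite \<Rightarrow> real) \<Rightarrow> ('x \<Rightarrow> real) \<Rightarrow> real" where
  "l1dist b1 b2 = (\<Sum>x\<in>UNIV. \<bar>b1 x - b2 x\<bar>)"

definition Pobs :: "('s::finite \<Rightarrow> 'a \<Rightarrow> 's \<Rightarrow> real) \<Rightarrow> ('s \<Rightarrow> 'o \<Rightarrow> real)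
    \<Rightarrow> ('s \<Rightarrow> real) \<Rightarrow> 'a \<Rightarrow> 'o \<Rightarrow> real" where
  "Pobs T Ob b a ob = (\<Sum>s\<in>UNIV. \<Sum>s'\<in>UNIV. b s * T s a s' * Ob s' ob)"

definition bupd :: "('s::finite \<Rightarrow> 'a \<Rightarrow> 's \<Rightarrow> real) \<Rightarrow> ('s \<Rightarrow> 'o \<Rightarrow> real)
    \<Rightarrow> ('s \<Rightarrow> real) \<Rightarrow> 'a \<Rightarrow> 'o \<Rightarrow> ('s \<Rightarrow> real)" where
  "bupd T Ob b a ob = (\<lambda>s'. (\<Sum>s\<in>UNIV. b s * T s a s') * Ob s' ob / Pobs T Ob b a ob)"

inductive_set reach :: "('s::finite \<Rightarrow> 'a \<Rightarrow> 's \<Rightarrow> real) \<Rightarrow> ('s \<Rightarrow> 'o \<Rightarrow> real)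
    \<Rightarrow> ('s \<Rightarrow> real) \<Rightarrow> ('s \<Rightarrow> real) set"
  for T Ob b0 where
  init: "b0 \<in> reach T Ob b0"
| step: "b \<in> reach T Ob b0 \<Longrightarrow> 0 < Pobs T Ob b a ob \<Longrightarrow> bupd T Ob b a ob \<in> reach T Ob b0"

definition rb :: "('s::finite \<Rightarrow> 'a \<Rightarrow> real) \<Rightarrow> ('s \<Rightarrow> real) \<Rightarrow> 'a \<Rightarrow> real" where
  "rb r b a = (\<Sum>s\<in>UNIV. b s * r s a)"

fun Vtrue_n :: "('s::finite \<Rightarrow> 'a::finite \<Rightarrow> 's \<Rightarrow> real) \<Rightarrow> ('s \<Rightarrow> 'o::finite \<Rightarrow> real)
    \<Rightarrow> ('s \<Rightarrow> 'a \<Rightarrow> real) \<Rightarrow> real \<Rightarrow> (('s \<Rightarrow> real) \<Rightarrow> 'a \<Rightarrow> real)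
    \<Rightarrow> nat \<Rightarrow> ('s \<Rightarrow> real) \<Rightarrow> real" where
  "Vtrue_n T Ob r \<gamma> \<pi> 0 b = 0"
| "Vtrue_n T Ob r \<gamma> \<pi> (Suc n) b =
     (\<Sum>a\<in>UNIV. \<pi> b a * (rb r b a + \<gamma> * (\<Sum>ob\<in>UNIV. Pobs T Ob b a ob * Vtrue_n T Ob r \<gamma> \<pi> n (bupd T Ob b a ob))))"

definition Vtrue where
  "Vtrue T Ob r \<gamma> \<pi> b = lim (\<lambda>n. Vtrue_n T Ob r \<gamma> \<pi> n b)"

definition rphi where
  "rphi r B p c a = infsum (\<lambda>b. p c b * rb r b a) B"

definition Pphi where
  "Pphi T Ob B p \<phi> c a c' =
     infsum (\<lambda>b. p c b * (\<Sum>ob\<in>{ob. \<phi> (bupd T Ob b a ob) = c'}. Pobs T Ob b a ob)) B"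

fun Vbin_n :: "('s::finite \<Rightarrow> 'a::finite \<Rightarrow> 's \<Rightarrow> real) \<Rightarrow> ('s \<Rightarrow> 'o::finite \<Rightarrow> real)
    \<Rightarrow> ('s \<Rightarrow> 'a \<Rightarrow> real) \<Rightarrow> real \<Rightarrow> ('s \<Rightarrow> real) set \<Rightarrow> ('s \<Rightarrow> real) set
    \<Rightarrow> (('s \<Rightarrow> real) \<Rightarrow> ('s \<Rightarrow> real) \<Rightarrow> real) \<Rightarrow> (('s \<Rightarrow> real) \<Rightarrow> ('s \<Rightarrow> real))
    \<Rightarrow> (('s \<Rightarrow> real) \<Rightarrow> 'a \<Rightarrow> real) \<Rightarrow> nat \<Rightarrow> ('s \<Rightarrow> real) \<Rightarrow> real" where
  "Vbin_n T Ob r \<gamma> B C p \<phi> \<pi> 0 c = 0"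
| "Vbin_n T Ob r \<gamma> B C p \<phi> \<pi> (Suc n) c =
     (\<Sum>a\<in>UNIV. \<pi> c a * (rphi r B p c a +
        \<gamma> * infsum (\<lambda>c'. Pphi T Ob B p \<phi> c a c' * Vbin_n T Ob r \<gamma> B C p \<phi> \<pi> n c') C))"

definition Vbin where
  "Vbin T Ob r \<gamma> B C p \<phi> \<pi> c = lim (\<lambda>n. Vbin_n T Ob r \<gamma> B C p \<phi> \<pi> n c)"

end

theory Submission
  imports Defs
begin

text \<open>
  Let W (\<open>Vlift\<close> below) be the value of the lifted policy \<open>\<pi> \<circ> \<phi>\<close> and \<open>Vmax = Rmax / (1 - \<gamma>)\<close>.
  The error splits as \<open>\<bar>V\<^sup>\<pi> - W\<bar> + \<bar>W - Vbin \<circ> \<phi>\<bar>\<close>.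
  Since \<open>\<pi> b\<close> and \<open>\<pi> (\<phi> b)\<close> are \<open>L\<pi> \<epsilon>\<close> apart in \<open>\<ell>\<^sub>1\<close> and all Q-values are bounded by Vmax,
  swapping the policy costs at most \<open>L\<pi> \<epsilon> Vmax\<close> per Bellman step, hence
  \<open>L\<pi> \<epsilon> Vmax / (1 - \<gamma>)\<close> in total.
  For the second term, the abstract backup at a bin c is exactly the \<open>p c\<close>-average over the
  bin of the true backup of \<open>Vbin \<circ> \<phi>\<close> with actions drawn from \<open>\<pi> c\<close> (a change of
  summation order); as W is a fixed point of the true backup and varies by at most
  \<open>LV \<epsilon>\<close> within a bin, the error e satisfies \<open>e \<le> LV \<epsilon> + \<gamma> e\<close>.
  The sum of the two bounds is below the stated constant.
\<close>

section \<open>Sums, limits and weighted averages\<close>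

lemma abs_sum_dist_mult_le:
  fixes w f :: "'x::finite \<Rightarrow> real"
  assumes w: "is_dist w" and f: "\<And>x. w x \<noteq> 0 \<Longrightarrow> \<bar>f x\<bar> \<le> K"
  shows "\<bar>\<Sum>x\<in>UNIV. w x * f x\<bar> \<le> K"
proof -
  have "\<bar>w x * f x\<bar> \<le> w x * K" for x
    using w f[of x] unfolding is_dist_def by (cases "w x = 0") (auto simp: abs_mult mult_left_mono)
  then have "\<bar>\<Sum>x\<in>UNIV. w x * f x\<bar> \<le> (\<Sum>x\<in>UNIV. w x * K)"
    by (intro order_trans[OF sum_abs] sum_mono)
  also have "\<dots> = K"
    using w unfolding is_dist_def by (simp add: sum_distrib_right[symmetric])
  finally show ?thesis .
qed

lemma abs_sum_diff_mult_le_l1dist: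
  fixes w v f :: "'x::finite \<Rightarrow> real"
  assumes "\<And>x. \<bar>f x\<bar> \<le> K"
  shows "\<bar>(\<Sum>x\<in>UNIV. w x * f x) - (\<Sum>x\<in>UNIV. v x * f x)\<bar> \<le> l1dist w v * K"
proof -
  have "\<bar>(\<Sum>x\<in>UNIV. w x * f x) - (\<Sum>x\<in>UNIV. v x * f x)\<bar> = \<bar>\<Sum>x\<in>UNIV. (w x - v x) * f x\<bar>"
    by (simp add: sum_subtractf left_diff_distrib)
  also have "\<dots> \<le> (\<Sum>x\<in>UNIV. \<bar>w x - v x\<bar> * K)"
    by (rule order_trans[OF sum_abs sum_mono]) (simp add: abs_mult assms mult_left_mono)
  also have "\<dots> = l1dist w v * K"
    by (simp add: l1dist_def sum_distrib_right)
  finally show ?thesis .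
qed

lemma l1dist_nonneg: "0 \<le> l1dist b1 b2"
  by (simp add: l1dist_def sum_nonneg)

lemma l1dist_commute: "l1dist b1 b2 = l1dist b2 b1"
  by (simp add: l1dist_def abs_minus_commute)

lemma convergent_if_increments_geometric:
  fixes x :: "nat \<Rightarrow> real"
  assumes "\<And>n. \<bar>x (Suc n) - x n\<bar> \<le> g ^ n * R" and "0 \<le> g" "g < 1"
  shows "convergent x"
proof -
  have "summable (\<lambda>n. x (Suc n) - x n)"
    by (rule summable_comparison_test'[where g = "\<lambda>n. g ^ n * R" and N = 0])
       (use assms in \<open>auto intro: summable_mult2 summable_geometric\<close>)
  then have "(\<lambda>n. x 0 + (\<Sum>k<n. x (Suc k) - x k)) \<longlonglongrightarrow> x 0 + (\<Sum>n. x (Suc n) - x n)"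
    by (intro tendsto_add tendsto_const summable_LIMSEQ)
  then show ?thesis
    by (auto simp: convergent_def sum_lessThan_telescope)
qed

lemma has_sum_diff:
  fixes f g :: "'x \<Rightarrow> 'b::topological_ab_group_add"
  assumes "(f has_sum a) A" and "(g has_sum b) A"
  shows "((\<lambda>x. f x - g x) has_sum (a - b)) A"
proof -
  have neg: "((\<lambda>x. - g x) has_sum - b) A"
    using assms(2) by (simp add: has_sum_uminus)
  show ?thesis
    using has_sum_add[OF assms(1) neg] by simp
qed

lemma has_sum_sum:
  fixes f :: "'i \<Rightarrow> 'x \<Rightarrow> 'b::topological_comm_monoid_add"
  assumes "finite I" and "\<And>i. i \<in> I \<Longrightarrow> (f i has_sum s i) A"
  shows "((\<lambda>x. \<Sum>i\<in>I. f i x) has_sum (\<Sum>i\<in>I. s i)) A"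
  using assms by (induction I rule: finite_induct) (auto intro!: has_sum_add)

lemma
  fixes p h :: "'x \<Rightarrow> real"
  assumes p: "(p has_sum 1) A" "\<And>x. x \<in> A \<Longrightarrow> 0 \<le> p x"
    and h: "\<And>x. x \<in> A \<Longrightarrow> p x \<noteq> 0 \<Longrightarrow> \<bar>h x\<bar> \<le> K"
  shows summable_on_weighted: "(\<lambda>x. p x * h x) summable_on A"
    and abs_infsum_weighted_le: "\<bar>infsum (\<lambda>x. p x * h x) A\<bar> \<le> K"
proof -
  have "\<exists>x\<in>A. p x \<noteq> 0"
    using has_sum_unique[OF p(1) has_sum_0[of A p]] by auto
  then have "0 \<le> K"
    using h by force
  have pK: "((\<lambda>x. K * p x) has_sum K) A"
    using has_sum_cmult_right[OF p(1), of K] by simp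
  have dom: "\<bar>p x * h x\<bar> \<le> K * p x" if "x \<in> A" for x
    using p(2)[OF that] h[OF that] \<open>0 \<le> K\<close>
    by (cases "p x = 0") (auto simp: abs_mult mult.commute mult_left_mono)
  have "(\<lambda>x. \<bar>p x * h x\<bar>) summable_on A"
    by (rule summable_on_comparison_test[OF has_sum_imp_summable[OF pK]]) (use dom in auto)
  then show summable: "(\<lambda>x. p x * h x) summable_on A"
    by (subst summable_on_iff_abs_summable_on_real) simp
  show "\<bar>infsum (\<lambda>x. p x * h x) A\<bar> \<le> K"
    using norm_infsum_le[OF has_sum_infsum[OF summable] pK] dom by simp
qed

lemma abs_has_sum_weighted_le:
  fixes p h :: "'x \<Rightarrow> real"
  assumes "(p has_sum 1) A" "\<And>x. x \<in> A \<Longrightarrow> 0 \<le> p x"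
    and "((\<lambda>x. p x * h x) has_sum S) A"
    and "\<And>x. x \<in> A \<Longrightarrow> p x \<noteq> 0 \<Longrightarrow> \<bar>h x\<bar> \<le> K"
  shows "\<bar>S\<bar> \<le> K"
  using abs_infsum_weighted_le[of p A h K] assms infsumI[OF assms(3)] by simp

lemma infsum_group_by:
  fixes f :: "'w \<Rightarrow> 'b::banach"
  assumes f: "f summable_on X" and k: "\<And>w. w \<in> X \<Longrightarrow> f w \<noteq> 0 \<Longrightarrow> k w \<in> Z"
  shows "infsum (\<lambda>z. infsum f {w \<in> X. k w = z}) Z = infsum f X"
proof -
  define S where "S = Sigma Z (\<lambda>z. {w \<in> X. k w = z})"
  have inj: "inj_on snd S"
    by (auto simp: S_def inj_on_def)
  have image: "snd ` S = {w \<in> X. k w \<in> Z}"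
    by (force simp: S_def)
  have "f summable_on snd ` S"
    unfolding image by (rule summable_on_subset_banach[OF f]) auto
  then have "(\<lambda>(z, w). f w) summable_on S"
    using summable_on_reindex[OF inj, of f] by (simp add: comp_def case_prod_unfold)
  then have "infsum (\<lambda>z. infsum f {w \<in> X. k w = z}) Z = infsum (\<lambda>(z, w). f w) S"
    unfolding S_def using infsum_Sigma_banach[of "\<lambda>(z, w). f w"] by simp
  also have "\<dots> = infsum f (snd ` S)"
    using infsum_reindex[OF inj, of f] by (simp add: comp_def case_prod_unfold)
  also have "\<dots> = infsum f X"
    unfolding image by (rule infsum_cong_neutral) (use k in auto)
  finally show ?thesis .
qed

lemma infsum_pushforward_kernel:
  fixes p :: "'x \<Rightarrow> real" and P :: "'x \<Rightarrow> 'y::finite \<Rightarrow> real"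
    and k :: "'x \<Rightarrow> 'y \<Rightarrow> 'z" and f :: "'z \<Rightarrow> real"
  assumes p: "(p has_sum 1) A" "\<And>x. x \<in> A \<Longrightarrow> 0 \<le> p x"
    and P: "\<And>x. x \<in> A \<Longrightarrow> is_dist (P x)"
    and k: "\<And>x y. x \<in> A \<Longrightarrow> P x y \<noteq> 0 \<Longrightarrow> k x y \<in> Z"
    and f: "\<And>z. z \<in> Z \<Longrightarrow> \<bar>f z\<bar> \<le> K"
  shows "infsum (\<lambda>z. infsum (\<lambda>x. p x * (\<Sum>y\<in>{y. k x y = z}. P x y)) A * f z) Z
       = infsum (\<lambda>x. p x * (\<Sum>y\<in>UNIV. P x y * f (k x y))) A"
proof -
  define g where "g = (\<lambda>(x, y). p x * P x y * f (k x y))"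
  have P_nonneg: "0 \<le> P x y" if "x \<in> A" for x y
    using P[OF that] by (simp add: is_dist_def)
  have "(\<lambda>x. p x * (\<Sum>y\<in>UNIV. P x y * \<bar>f (k x y)\<bar>)) summable_on A"
  proof (rule summable_on_weighted[OF p])
    fix x assume "x \<in> A"
    show "\<bar>\<Sum>y\<in>UNIV. P x y * \<bar>f (k x y)\<bar>\<bar> \<le> K"
      by (rule abs_sum_dist_mult_le[OF P[OF \<open>x \<in> A\<close>]]) (use k f \<open>x \<in> A\<close> in force)
  qed
  then have "(\<lambda>x. \<Sum>y\<in>UNIV. \<bar>g (x, y)\<bar>) summable_on A"
    by (rule summable_on_cong[THEN iffD1, rotated])
       (simp add: g_def abs_mult sum_distrib_left P_nonneg p(2) mult.assoc)
  then have "(\<lambda>w. \<bar>g w\<bar>) summable_on A \<times> UNIV"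
    by (rule summable_on_SigmaI[rotated]) simp_all
  then have g: "g summable_on A \<times> UNIV"
    by (subst summable_on_iff_abs_summable_on_real) simp
  have fibre: "infsum g {w \<in> A \<times> UNIV. case_prod k w = z}
      = infsum (\<lambda>x. p x * (\<Sum>y\<in>{y. k x y = z}. P x y)) A * f z" for z
  proof -
    have Sigma: "{w \<in> A \<times> UNIV. case_prod k w = z} = Sigma A (\<lambda>x. {y. k x y = z})"
      by auto
    have "g summable_on Sigma A (\<lambda>x. {y. k x y = z})"
      by (rule summable_on_subset_banach[OF g]) auto
    then have "infsum g {w \<in> A \<times> UNIV. case_prod k w = z}
        = infsum (\<lambda>x. infsum (\<lambda>y. g (x, y)) {y. k x y = z}) A"
      unfolding Sigma by (rule infsum_Sigma_banach[symmetric])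
    also have "\<dots> = infsum (\<lambda>x. p x * (\<Sum>y\<in>{y. k x y = z}. P x y) * f z) A"
      by (rule infsum_cong) (auto simp: g_def sum_distrib_left sum_distrib_right intro!: sum.cong)
    also have "\<dots> = infsum (\<lambda>x. p x * (\<Sum>y\<in>{y. k x y = z}. P x y)) A * f z"
      by (rule infsum_cmult_left')
    finally show ?thesis .
  qed
  have "infsum (\<lambda>z. infsum (\<lambda>x. p x * (\<Sum>y\<in>{y. k x y = z}. P x y)) A * f z) Z
      = infsum (\<lambda>z. infsum g {w \<in> A \<times> UNIV. case_prod k w = z}) Z"
    by (simp add: fibre)
  also have "\<dots> = infsum g (A \<times> UNIV)"
    by (rule infsum_group_by[OF g]) (auto simp: g_def k)
  also have "\<dots> = infsum (\<lambda>x. infsum (\<lambda>y. g (x, y)) UNIV) A"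
    using infsum_Sigma_banach[OF g] by simp
  also have "\<dots> = infsum (\<lambda>x. p x * (\<Sum>y\<in>UNIV. P x y * f (k x y))) A"
    by (rule infsum_cong) (simp add: g_def sum_distrib_left mult.assoc)
  finally show ?thesis .
qed

section \<open>The belief MDP\<close>

locale pomdp =
  fixes T :: "'s::finite \<Rightarrow> 'a::finite \<Rightarrow> 's \<Rightarrow> real"
    and Ob :: "'s \<Rightarrow> 'o::finite \<Rightarrow> real"
    and r :: "'s \<Rightarrow> 'a \<Rightarrow> real"
    and b0 :: "'s \<Rightarrow> real"
    and Rmax \<gamma> :: real
  assumes T_dist: "\<And>s a. is_dist (T s a)"
    and Ob_dist: "\<And>s'. is_dist (Ob s')"
    and b0_dist: "is_dist b0"
    and r_bounds: "\<And>s a. 0 \<le> r s a \<and> r s a \<le> Rmax"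
    and gamma_nonneg: "0 \<le> \<gamma>"
    and gamma_less_one: "\<gamma> < 1"
begin

abbreviation B :: "('s \<Rightarrow> real) set" where
  "B \<equiv> reach T Ob b0"

definition Vmax :: real where
  "Vmax = Rmax / (1 - \<gamma>)"

lemma Rmax_nonneg: "0 \<le> Rmax"
  using r_bounds[of undefined undefined] by linarith

lemma Vmax_nonneg: "0 \<le> Vmax"
  unfolding Vmax_def using Rmax_nonneg gamma_less_one by simp

lemma Rmax_add_gamma_Vmax: "Rmax + \<gamma> * Vmax = Vmax"
  unfolding Vmax_def using gamma_less_one by (simp add: field_simps)

lemma Pobs_nonneg: "is_dist b \<Longrightarrow> 0 \<le> Pobs T Ob b a ob"
  unfolding Pobs_def using T_dist Ob_dist unfolding is_dist_def by (auto intro!: sum_nonneg)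

lemma sum_Pobs:
  assumes "is_dist b"
  shows "(\<Sum>ob\<in>UNIV. Pobs T Ob b a ob) = 1"
proof -
  have "(\<Sum>ob\<in>UNIV. Pobs T Ob b a ob) = (\<Sum>s\<in>UNIV. \<Sum>s'\<in>UNIV. \<Sum>ob\<in>UNIV. b s * T s a s' * Ob s' ob)"
    unfolding Pobs_def by (subst sum.swap) (rule sum.cong[OF refl], rule sum.swap)
  also have "\<dots> = (\<Sum>s\<in>UNIV. \<Sum>s'\<in>UNIV. b s * T s a s' * (\<Sum>ob\<in>UNIV. Ob s' ob))"
    by (simp add: sum_distrib_left)
  also have "\<dots> = (\<Sum>s\<in>UNIV. b s * (\<Sum>s'\<in>UNIV. T s a s'))"
    using Ob_dist unfolding is_dist_def by (simp add: sum_distrib_left)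
  also have "\<dots> = 1"
    using T_dist assms unfolding is_dist_def by simp
  finally show ?thesis .
qed

lemma is_dist_Pobs: "is_dist b \<Longrightarrow> is_dist (Pobs T Ob b a)"
  using Pobs_nonneg sum_Pobs unfolding is_dist_def by blast

lemma is_dist_bupd:
  assumes b: "is_dist b" and P: "Pobs T Ob b a ob \<noteq> 0"
  shows "is_dist (bupd T Ob b a ob)"
proof -
  have "0 < Pobs T Ob b a ob"
    using Pobs_nonneg[OF b] P by (simp add: order_less_le)
  moreover have "Pobs T Ob b a ob = (\<Sum>s'\<in>UNIV. (\<Sum>s\<in>UNIV. b s * T s a s') * Ob s' ob)"
    unfolding Pobs_def by (subst sum.swap) (simp add: sum_distrib_right)
  moreover have "0 \<le> (\<Sum>s\<in>UNIV. b s * T s a s') * Ob s' ob" for s'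
    using b T_dist Ob_dist unfolding is_dist_def by (auto intro!: sum_nonneg mult_nonneg_nonneg)
  ultimately show ?thesis
    unfolding is_dist_def bupd_def by (simp add: sum_divide_distrib[symmetric])
qed

lemma reach_is_dist: "b \<in> B \<Longrightarrow> is_dist b"
  by (induction rule: reach.induct) (auto simp: b0_dist is_dist_bupd)

lemma bupd_in_reach: "b \<in> B \<Longrightarrow> Pobs T Ob b a ob \<noteq> 0 \<Longrightarrow> bupd T Ob b a ob \<in> B"
  using reach.step Pobs_nonneg reach_is_dist by (metis order_less_le)

lemma abs_rb_le: "is_dist b \<Longrightarrow> \<bar>rb r b a\<bar> \<le> Rmax"
  unfolding rb_def using r_bounds by (intro abs_sum_dist_mult_le) auto

definition qval :: "(('s \<Rightarrow> real) \<Rightarrow> real) \<Rightarrow> ('s \<Rightarrow> real) \<Rightarrow> 'a \<Rightarrow> real" where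
  "qval F b a = rb r b a + \<gamma> * (\<Sum>ob\<in>UNIV. Pobs T Ob b a ob * F (bupd T Ob b a ob))"

definition bellman :: "('a \<Rightarrow> real) \<Rightarrow> (('s \<Rightarrow> real) \<Rightarrow> real) \<Rightarrow> ('s \<Rightarrow> real) \<Rightarrow> real" where
  "bellman w F b = (\<Sum>a\<in>UNIV. w a * qval F b a)"

lemma Vtrue_n_Suc: "Vtrue_n T Ob r \<gamma> \<sigma> (Suc n) b = bellman (\<sigma> b) (Vtrue_n T Ob r \<gamma> \<sigma> n) b"
  by (simp add: bellman_def qval_def)

lemma abs_qval_le:
  assumes b: "b \<in> B" and F: "\<And>b'. b' \<in> B \<Longrightarrow> \<bar>F b'\<bar> \<le> K"
  shows "\<bar>qval F b a\<bar> \<le> Rmax + \<gamma> * K"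
proof -
  have "\<bar>\<Sum>ob\<in>UNIV. Pobs T Ob b a ob * F (bupd T Ob b a ob)\<bar> \<le> K"
    using b by (intro abs_sum_dist_mult_le is_dist_Pobs reach_is_dist F bupd_in_reach)
  then have "\<bar>\<gamma> * (\<Sum>ob\<in>UNIV. Pobs T Ob b a ob * F (bupd T Ob b a ob))\<bar> \<le> \<gamma> * K"
    using gamma_nonneg by (simp add: abs_mult mult_left_mono)
  then show ?thesis
    using abs_rb_le[OF reach_is_dist[OF b], of a] unfolding qval_def by linarith
qed

lemma abs_qval_diff_le:
  assumes b: "b \<in> B" and FG: "\<And>b'. b' \<in> B \<Longrightarrow> \<bar>F b' - G b'\<bar> \<le> D"
  shows "\<bar>qval F b a - qval G b a\<bar> \<le> \<gamma> * D"
proof -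
  have "\<bar>\<Sum>ob\<in>UNIV. Pobs T Ob b a ob * (F (bupd T Ob b a ob) - G (bupd T Ob b a ob))\<bar> \<le> D"
    using b by (intro abs_sum_dist_mult_le is_dist_Pobs reach_is_dist FG bupd_in_reach)
  moreover have "qval F b a - qval G b a
      = \<gamma> * (\<Sum>ob\<in>UNIV. Pobs T Ob b a ob * (F (bupd T Ob b a ob) - G (bupd T Ob b a ob)))"
    by (simp add: qval_def right_diff_distrib sum_subtractf)
  ultimately show ?thesis
    using gamma_nonneg by (simp add: abs_mult mult_left_mono)
qed

lemma abs_bellman_le:
  assumes "is_dist w" "b \<in> B" "\<And>b'. b' \<in> B \<Longrightarrow> \<bar>F b'\<bar> \<le> K"
  shows "\<bar>bellman w F b\<bar> \<le> Rmax + \<gamma> * K"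
  unfolding bellman_def using assms by (intro abs_sum_dist_mult_le abs_qval_le)

lemma abs_bellman_diff_le:
  assumes "is_dist w" "b \<in> B" "\<And>b'. b' \<in> B \<Longrightarrow> \<bar>F b' - G b'\<bar> \<le> D"
  shows "\<bar>bellman w F b - bellman w G b\<bar> \<le> \<gamma> * D"
proof -
  have "\<bar>\<Sum>a\<in>UNIV. w a * (qval F b a - qval G b a)\<bar> \<le> \<gamma> * D"
    using assms by (intro abs_sum_dist_mult_le abs_qval_diff_le)
  then show ?thesis
    by (simp add: bellman_def right_diff_distrib sum_subtractf)
qed

lemma abs_bellman_policy_diff_le:
  assumes "b \<in> B" "\<And>b'. b' \<in> B \<Longrightarrow> \<bar>F b'\<bar> \<le> K"
  shows "\<bar>bellman w F b - bellman v F b\<bar> \<le> l1dist w v * (Rmax + \<gamma> * K)"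
  unfolding bellman_def using assms by (intro abs_sum_diff_mult_le_l1dist abs_qval_le)

lemma bellman_LIMSEQ:
  assumes "b \<in> B" and "\<And>b'. b' \<in> B \<Longrightarrow> (\<lambda>n. F n b') \<longlonglongrightarrow> G b'"
  shows "(\<lambda>n. bellman w (F n) b) \<longlonglongrightarrow> bellman w G b"
proof -
  have lim_ob: "(\<lambda>n. Pobs T Ob b a ob * F n (bupd T Ob b a ob))
      \<longlonglongrightarrow> Pobs T Ob b a ob * G (bupd T Ob b a ob)" for a ob
    using assms bupd_in_reach by (cases "Pobs T Ob b a ob = 0") (auto intro: tendsto_mult_left)
  have "(\<lambda>n. qval (F n) b a) \<longlonglongrightarrow> qval G b a" for a
    unfolding qval_def by (rule tendsto_add[OF tendsto_const tendsto_mult_left[OF tendsto_sum[OF lim_ob]]])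
  then show ?thesis
    unfolding bellman_def by (intro tendsto_sum tendsto_mult_left)
qed

context
  fixes \<sigma> :: "('s \<Rightarrow> real) \<Rightarrow> 'a \<Rightarrow> real"
  assumes \<sigma>_dist: "\<And>b. b \<in> B \<Longrightarrow> is_dist (\<sigma> b)"
begin

lemma abs_Vtrue_n_le: "b \<in> B \<Longrightarrow> \<bar>Vtrue_n T Ob r \<gamma> \<sigma> n b\<bar> \<le> Vmax"
proof (induction n arbitrary: b)
  case 0
  then show ?case using Vmax_nonneg by simp
next
  case (Suc n)
  then show ?case
    using abs_bellman_le[OF \<sigma>_dist[OF Suc.prems] Suc.prems Suc.IH] Rmax_add_gamma_Vmax
    by (simp only: Vtrue_n_Suc)
qed

lemma abs_Vtrue_n_Suc_diff_le:
  "b \<in> B \<Longrightarrow> \<bar>Vtrue_n T Ob r \<gamma> \<sigma> (Suc n) b - Vtrue_n T Ob r \<gamma> \<sigma> n b\<bar> \<le> \<gamma> ^ n * Rmax"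
proof (induction n arbitrary: b)
  case 0
  have "\<bar>bellman (\<sigma> b) (Vtrue_n T Ob r \<gamma> \<sigma> 0) b\<bar> \<le> Rmax + \<gamma> * 0"
    by (rule abs_bellman_le) (simp_all add: \<sigma>_dist 0)
  then show ?case
    by (simp only: Vtrue_n_Suc) simp
next
  case (Suc n)
  have "\<bar>bellman (\<sigma> b) (Vtrue_n T Ob r \<gamma> \<sigma> (Suc n)) b - bellman (\<sigma> b) (Vtrue_n T Ob r \<gamma> \<sigma> n) b\<bar>
      \<le> \<gamma> * (\<gamma> ^ n * Rmax)"
    by (rule abs_bellman_diff_le[OF \<sigma>_dist[OF Suc.prems] Suc.prems Suc.IH])
  then show ?case
    by (simp only: Vtrue_n_Suc power_Suc mult.assoc)
qed

lemma Vtrue_n_LIMSEQ: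
  assumes "b \<in> B"
  shows "(\<lambda>n. Vtrue_n T Ob r \<gamma> \<sigma> n b) \<longlonglongrightarrow> Vtrue T Ob r \<gamma> \<sigma> b"
proof -
  have "convergent (\<lambda>n. Vtrue_n T Ob r \<gamma> \<sigma> n b)"
    by (rule convergent_if_increments_geometric[OF abs_Vtrue_n_Suc_diff_le[OF assms] gamma_nonneg gamma_less_one])
  then show ?thesis
    unfolding Vtrue_def by (simp add: convergent_LIMSEQ_iff)
qed

lemma abs_Vtrue_le: "b \<in> B \<Longrightarrow> \<bar>Vtrue T Ob r \<gamma> \<sigma> b\<bar> \<le> Vmax"
  by (rule Lim_bounded[OF tendsto_rabs[OF Vtrue_n_LIMSEQ]]) (auto intro: abs_Vtrue_n_le)

lemma Vtrue_bellman:
  assumes "b \<in> B"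
  shows "Vtrue T Ob r \<gamma> \<sigma> b = bellman (\<sigma> b) (Vtrue T Ob r \<gamma> \<sigma>) b"
proof -
  have "(\<lambda>n. bellman (\<sigma> b) (Vtrue_n T Ob r \<gamma> \<sigma> n) b) \<longlonglongrightarrow> bellman (\<sigma> b) (Vtrue T Ob r \<gamma> \<sigma>) b"
    using assms Vtrue_n_LIMSEQ by (rule bellman_LIMSEQ)
  moreover have "(\<lambda>n. bellman (\<sigma> b) (Vtrue_n T Ob r \<gamma> \<sigma> n) b) \<longlonglongrightarrow> Vtrue T Ob r \<gamma> \<sigma> b"
    using LIMSEQ_Suc[OF Vtrue_n_LIMSEQ[OF assms]] by (simp only: Vtrue_n_Suc)
  ultimately show ?thesis
    by (rule LIMSEQ_unique[rotated])
qed

end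

lemma abs_Vtrue_n_policy_diff_le:
  assumes \<sigma>: "\<And>b. b \<in> B \<Longrightarrow> is_dist (\<sigma> b)" and \<tau>: "\<And>b. b \<in> B \<Longrightarrow> is_dist (\<tau> b)"
    and \<delta>: "\<And>b. b \<in> B \<Longrightarrow> l1dist (\<sigma> b) (\<tau> b) \<le> \<delta>"
    and b: "b \<in> B"
  shows "\<bar>Vtrue_n T Ob r \<gamma> \<sigma> n b - Vtrue_n T Ob r \<gamma> \<tau> n b\<bar> \<le> \<delta> * Vmax / (1 - \<gamma>)"
  using b
proof (induction n arbitrary: b)
  case 0
  have "0 \<le> \<delta>"
    using \<delta>[OF reach.init] l1dist_nonneg order_trans by blast
  then show ?case
    using Vmax_nonneg gamma_less_one by simp
next
  case (Suc n)
  let ?V\<sigma> = "Vtrue_n T Ob r \<gamma> \<sigma> n" and ?V\<tau> = "Vtrue_n T Ob r \<gamma> \<tau> n"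
  have "\<bar>bellman (\<sigma> b) ?V\<sigma> b - bellman (\<tau> b) ?V\<sigma> b\<bar> \<le> l1dist (\<sigma> b) (\<tau> b) * (Rmax + \<gamma> * Vmax)"
    by (rule abs_bellman_policy_diff_le[OF Suc.prems abs_Vtrue_n_le[OF \<sigma>]])
  also have "\<dots> \<le> \<delta> * Vmax"
    using \<delta>[OF Suc.prems] Vmax_nonneg by (simp add: Rmax_add_gamma_Vmax mult_right_mono)
  finally have policy: "\<bar>bellman (\<sigma> b) ?V\<sigma> b - bellman (\<tau> b) ?V\<sigma> b\<bar> \<le> \<delta> * Vmax" .
  have continuation: "\<bar>bellman (\<tau> b) ?V\<sigma> b - bellman (\<tau> b) ?V\<tau> b\<bar> \<le> \<gamma> * (\<delta> * Vmax / (1 - \<gamma>))"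
    by (rule abs_bellman_diff_le[OF \<tau>[OF Suc.prems] Suc.prems Suc.IH])
  have "\<delta> * Vmax + \<gamma> * (\<delta> * Vmax / (1 - \<gamma>)) = \<delta> * Vmax / (1 - \<gamma>)"
    using gamma_less_one by (simp add: field_simps)
  then show ?case
    using policy continuation unfolding Vtrue_n_Suc by linarith
qed

lemma abs_Vtrue_policy_diff_le:
  assumes \<sigma>: "\<And>b. b \<in> B \<Longrightarrow> is_dist (\<sigma> b)" and \<tau>: "\<And>b. b \<in> B \<Longrightarrow> is_dist (\<tau> b)"
    and \<delta>: "\<And>b. b \<in> B \<Longrightarrow> l1dist (\<sigma> b) (\<tau> b) \<le> \<delta>"
    and b: "b \<in> B"
  shows "\<bar>Vtrue T Ob r \<gamma> \<sigma> b - Vtrue T Ob r \<gamma> \<tau> b\<bar> \<le> \<delta> * Vmax / (1 - \<gamma>)"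
  by (rule Lim_bounded[OF tendsto_rabs[OF tendsto_diff[OF Vtrue_n_LIMSEQ[OF \<sigma> b] Vtrue_n_LIMSEQ[OF \<tau> b]]]])
     (use abs_Vtrue_n_policy_diff_le[OF \<sigma> \<tau> \<delta> b] in auto)

end

section \<open>The binned abstraction\<close>

locale binned_pomdp = pomdp T Ob r b0 Rmax \<gamma>
  for T :: "'s::finite \<Rightarrow> 'a::finite \<Rightarrow> 's \<Rightarrow> real"
    and Ob :: "'s \<Rightarrow> 'o::finite \<Rightarrow> real"
    and r :: "'s \<Rightarrow> 'a \<Rightarrow> real"
    and b0 :: "'s \<Rightarrow> real"
    and Rmax \<gamma> :: real +
  fixes \<epsilon> L\<pi> LV :: real
    and C :: "('s \<Rightarrow> real) set"
    and \<phi> :: "('s \<Rightarrow> real) \<Rightarrow> ('s \<Rightarrow> real)"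
    and p :: "('s \<Rightarrow> real) \<Rightarrow> ('s \<Rightarrow> real) \<Rightarrow> real"
    and \<pi> :: "('s \<Rightarrow> real) \<Rightarrow> 'a \<Rightarrow> real"
  assumes eps: "0 \<le> \<epsilon>"
    and C_sub: "C \<subseteq> reach T Ob b0"
    and phi_into: "\<And>b. b \<in> reach T Ob b0 \<Longrightarrow> \<phi> b \<in> C"
    and phi_close: "\<And>b. b \<in> reach T Ob b0 \<Longrightarrow> l1dist (\<phi> b) b \<le> \<epsilon>"
    and phi_bins: "\<And>b1 b2. b1 \<in> reach T Ob b0 \<Longrightarrow> b2 \<in> reach T Ob b0 \<Longrightarrow> \<phi> b1 = \<phi> b2 \<Longrightarrow>
        l1dist b1 b2 \<le> \<epsilon>"
    and p_nonneg: "\<And>c b. c \<in> C \<Longrightarrow> 0 \<le> p c b"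
    and p_supp: "\<And>c b. c \<in> C \<Longrightarrow> p c b \<noteq> 0 \<Longrightarrow> b \<in> reach T Ob b0 \<and> \<phi> b = c"
    and p_sum: "\<And>c. c \<in> C \<Longrightarrow> ((\<lambda>b. p c b) has_sum 1) (reach T Ob b0)"
    and pi_dist: "\<And>b. b \<in> reach T Ob b0 \<Longrightarrow> is_dist (\<pi> b)"
    and Lpi_nonneg: "0 \<le> L\<pi>"
    and pi_lip: "\<And>b1 b2. b1 \<in> reach T Ob b0 \<Longrightarrow> b2 \<in> reach T Ob b0 \<Longrightarrow>
        l1dist (\<pi> b1) (\<pi> b2) \<le> L\<pi> * l1dist b1 b2"
    and LV_nonneg: "0 \<le> LV"
    and V_lip: "\<And>b1 b2. b1 \<in> reach T Ob b0 \<Longrightarrow> b2 \<in> reach T Ob b0 \<Longrightarrow>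
        \<bar>Vtrue T Ob r \<gamma> (\<lambda>b. \<pi> (\<phi> b)) b1 - Vtrue T Ob r \<gamma> (\<lambda>b. \<pi> (\<phi> b)) b2\<bar> \<le> LV * l1dist b1 b2"
begin

abbreviation Vb :: "nat \<Rightarrow> ('s \<Rightarrow> real) \<Rightarrow> real" where
  "Vb n \<equiv> Vbin_n T Ob r \<gamma> B C p \<phi> \<pi> n"

abbreviation Vlift :: "('s \<Rightarrow> real) \<Rightarrow> real" where
  "Vlift \<equiv> Vtrue T Ob r \<gamma> (\<lambda>b. \<pi> (\<phi> b))"

lemma is_dist_pi_bin: "c \<in> C \<Longrightarrow> is_dist (\<pi> c)"
  using C_sub pi_dist by blast

lemma is_dist_pi_lift: "b \<in> B \<Longrightarrow> is_dist (\<pi> (\<phi> b))"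
  using is_dist_pi_bin phi_into by blast

lemma l1dist_pi_lift_le:
  assumes b: "b \<in> B"
  shows "l1dist (\<pi> b) (\<pi> (\<phi> b)) \<le> L\<pi> * \<epsilon>"
proof -
  have "l1dist (\<pi> b) (\<pi> (\<phi> b)) \<le> L\<pi> * l1dist b (\<phi> b)"
    using b phi_into C_sub by (intro pi_lip) auto
  also have "\<dots> \<le> L\<pi> * \<epsilon>"
    using phi_close[OF b] Lpi_nonneg by (simp add: l1dist_commute mult_left_mono)
  finally show ?thesis .
qed

lemma has_sum_Vbin_n_Suc:
  assumes c: "c \<in> C" and K: "\<And>c'. c' \<in> C \<Longrightarrow> \<bar>Vb n c'\<bar> \<le> K"
  shows "((\<lambda>b. p c b * bellman (\<pi> c) (\<lambda>b'. Vb n (\<phi> b')) b) has_sum Vb (Suc n) c) B"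
proof -
  let ?F = "\<lambda>b'. Vb n (\<phi> b')"
  let ?S = "\<lambda>b a. \<Sum>ob\<in>UNIV. Pobs T Ob b a ob * ?F (bupd T Ob b a ob)"
  have weighted: "(\<lambda>b. p c b * h b) summable_on B" if "\<And>b. b \<in> B \<Longrightarrow> \<bar>h b\<bar> \<le> H" for h H
    using that by (intro summable_on_weighted[OF p_sum[OF c] p_nonneg[OF c]])
  have reward: "((\<lambda>b. p c b * rb r b a) has_sum rphi r B p c a) B" for a
    unfolding rphi_def by (rule has_sum_infsum, rule weighted) (use abs_rb_le reach_is_dist in blast)
  have obs: "((\<lambda>b. p c b * ?S b a) has_sum infsum (\<lambda>c'. Pphi T Ob B p \<phi> c a c' * Vb n c') C) B" for a
  proof -
    have "infsum (\<lambda>c'. Pphi T Ob B p \<phi> c a c' * Vb n c') C = infsum (\<lambda>b. p c b * ?S b a) B"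
      unfolding Pphi_def
      by (rule infsum_pushforward_kernel[where k = "\<lambda>b ob. \<phi> (bupd T Ob b a ob)"
            and P = "\<lambda>b. Pobs T Ob b a", OF p_sum[OF c] p_nonneg[OF c] is_dist_Pobs[OF reach_is_dist] _ K])
         (use phi_into bupd_in_reach in blast)+
    moreover have "(\<lambda>b. p c b * ?S b a) summable_on B"
      using K phi_into bupd_in_reach
      by (intro weighted abs_sum_dist_mult_le is_dist_Pobs reach_is_dist) blast+
    ultimately show ?thesis
      by simp
  qed
  have backup: "((\<lambda>b. p c b * qval ?F b a)
      has_sum rphi r B p c a + \<gamma> * infsum (\<lambda>c'. Pphi T Ob B p \<phi> c a c' * Vb n c') C) B" for a
  proof -
    have "((\<lambda>b. p c b * rb r b a + \<gamma> * (p c b * ?S b a))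
        has_sum rphi r B p c a + \<gamma> * infsum (\<lambda>c'. Pphi T Ob B p \<phi> c a c' * Vb n c') C) B"
      by (intro has_sum_add reward has_sum_cmult_right obs)
    then show ?thesis
      unfolding qval_def by (simp add: algebra_simps)
  qed
  have "((\<lambda>b. \<Sum>a\<in>UNIV. \<pi> c a * (p c b * qval ?F b a)) has_sum
      (\<Sum>a\<in>UNIV. \<pi> c a * (rphi r B p c a + \<gamma> * infsum (\<lambda>c'. Pphi T Ob B p \<phi> c a c' * Vb n c') C))) B"
    by (intro has_sum_sum has_sum_cmult_right backup) simp
  moreover have "(\<lambda>b. \<Sum>a\<in>UNIV. \<pi> c a * (p c b * qval ?F b a)) = (\<lambda>b. p c b * bellman (\<pi> c) ?F b)"
    by (simp add: bellman_def sum_distrib_left mult.left_commute)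
  ultimately show ?thesis
    by simp
qed

lemma abs_Vbin_n_le: "c \<in> C \<Longrightarrow> \<bar>Vb n c\<bar> \<le> Vmax"
proof (induction n arbitrary: c)
  case 0
  then show ?case using Vmax_nonneg by simp
next
  case (Suc n)
  show ?case
  proof (rule abs_has_sum_weighted_le[OF p_sum[OF Suc.prems] p_nonneg[OF Suc.prems]
        has_sum_Vbin_n_Suc[OF Suc.prems Suc.IH]])
    fix b assume "b \<in> B"
    then have "\<bar>bellman (\<pi> c) (\<lambda>b'. Vb n (\<phi> b')) b\<bar> \<le> Rmax + \<gamma> * Vmax"
      using phi_into Suc.IH by (intro abs_bellman_le is_dist_pi_bin Suc.prems) auto
    then show "\<bar>bellman (\<pi> c) (\<lambda>b'. Vb n (\<phi> b')) b\<bar> \<le> Vmax"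
      by (simp only: Rmax_add_gamma_Vmax)
  qed
qed

lemma abs_Vbin_n_Suc_diff_le: "c \<in> C \<Longrightarrow> \<bar>Vb (Suc n) c - Vb n c\<bar> \<le> \<gamma> ^ n * Rmax"
proof (induction n arbitrary: c)
  case 0
  have "\<bar>Vb (Suc 0) c\<bar> \<le> Rmax"
  proof (rule abs_has_sum_weighted_le[OF p_sum[OF 0] p_nonneg[OF 0] has_sum_Vbin_n_Suc[OF 0, of 0 0]])
    fix b assume "b \<in> B"
    then have "\<bar>bellman (\<pi> c) (\<lambda>b'. Vb 0 (\<phi> b')) b\<bar> \<le> Rmax + \<gamma> * 0"
      by (intro abs_bellman_le is_dist_pi_bin 0) auto
    then show "\<bar>bellman (\<pi> c) (\<lambda>b'. Vb 0 (\<phi> b')) b\<bar> \<le> Rmax"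
      by simp
  qed simp
  then show ?case
    by (simp only: Vbin_n.simps(1) diff_zero power_0 mult_1_left)
next
  case (Suc n)
  have "((\<lambda>b. p c b * (bellman (\<pi> c) (\<lambda>b'. Vb (Suc n) (\<phi> b')) b - bellman (\<pi> c) (\<lambda>b'. Vb n (\<phi> b')) b))
      has_sum Vb (Suc (Suc n)) c - Vb (Suc n) c) B"
    using has_sum_diff[OF has_sum_Vbin_n_Suc[OF Suc.prems abs_Vbin_n_le] has_sum_Vbin_n_Suc[OF Suc.prems abs_Vbin_n_le]]
    by (simp only: right_diff_distrib)
  then have "\<bar>Vb (Suc (Suc n)) c - Vb (Suc n) c\<bar> \<le> \<gamma> * (\<gamma> ^ n * Rmax)"
  proof (rule abs_has_sum_weighted_le[OF p_sum[OF Suc.prems] p_nonneg[OF Suc.prems]])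
    fix b assume "b \<in> B"
    then show "\<bar>bellman (\<pi> c) (\<lambda>b'. Vb (Suc n) (\<phi> b')) b - bellman (\<pi> c) (\<lambda>b'. Vb n (\<phi> b')) b\<bar>
        \<le> \<gamma> * (\<gamma> ^ n * Rmax)"
      using phi_into Suc.IH by (intro abs_bellman_diff_le is_dist_pi_bin Suc.prems) auto
  qed
  then show ?case
    by (simp only: power_Suc mult.assoc)
qed

lemma Vbin_n_LIMSEQ:
  assumes "c \<in> C"
  shows "(\<lambda>n. Vb n c) \<longlonglongrightarrow> Vbin T Ob r \<gamma> B C p \<phi> \<pi> c"
proof -
  have "convergent (\<lambda>n. Vb n c)"
    by (rule convergent_if_increments_geometric[OF abs_Vbin_n_Suc_diff_le[OF assms] gamma_nonneg gamma_less_one])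
  then show ?thesis
    unfolding Vbin_def by (simp add: convergent_LIMSEQ_iff)
qed

lemma abs_Vlift_Vbin_n_le:
  "b \<in> B \<Longrightarrow> \<bar>Vlift b - Vb n (\<phi> b)\<bar> \<le> LV * \<epsilon> / (1 - \<gamma>) + \<gamma> ^ n * Vmax"
proof (induction n arbitrary: b)
  case 0
  have "0 \<le> LV * \<epsilon> / (1 - \<gamma>)"
    using LV_nonneg eps gamma_less_one by simp
  then show ?case
    using abs_Vtrue_le[of "\<lambda>b. \<pi> (\<phi> b)", OF is_dist_pi_lift 0] by simp
next
  case (Suc n)
  let ?E = "LV * \<epsilon> / (1 - \<gamma>)"
  define c where "c = \<phi> b"
  have c: "c \<in> C"
    using phi_into Suc.prems c_def by blast
  have "((\<lambda>b'. p c b' * (Vlift b - bellman (\<pi> c) (\<lambda>b''. Vb n (\<phi> b'')) b'))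
      has_sum Vlift b - Vb (Suc n) c) B"
    using has_sum_diff[OF has_sum_cmult_left[OF p_sum[OF c], of "Vlift b"] has_sum_Vbin_n_Suc[OF c abs_Vbin_n_le]]
    by (simp only: right_diff_distrib mult_1_left mult.commute)
  then have "\<bar>Vlift b - Vb (Suc n) c\<bar> \<le> ?E + \<gamma> ^ Suc n * Vmax"
  proof (rule abs_has_sum_weighted_le[OF p_sum[OF c] p_nonneg[OF c]])
    fix b' assume b': "b' \<in> B" and "p c b' \<noteq> 0"
    then have "\<phi> b' = c"
      using p_supp[OF c] by blast
    then have Vlift_b': "Vlift b' = bellman (\<pi> c) Vlift b'"
      using Vtrue_bellman[of "\<lambda>b. \<pi> (\<phi> b)", OF is_dist_pi_lift b'] by simp
    have "l1dist b b' \<le> \<epsilon>"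
      using phi_bins[OF Suc.prems b'] \<open>\<phi> b' = c\<close> c_def by simp
    then have "\<bar>Vlift b - Vlift b'\<bar> \<le> LV * \<epsilon>"
      using V_lip[OF Suc.prems b'] LV_nonneg by (meson mult_left_mono order_trans)
    moreover have "\<bar>bellman (\<pi> c) Vlift b' - bellman (\<pi> c) (\<lambda>b''. Vb n (\<phi> b'')) b'\<bar>
        \<le> \<gamma> * (?E + \<gamma> ^ n * Vmax)"
      by (rule abs_bellman_diff_le[OF is_dist_pi_bin[OF c] b' Suc.IH])
    moreover have "LV * \<epsilon> + \<gamma> * (?E + \<gamma> ^ n * Vmax) = ?E + \<gamma> ^ Suc n * Vmax"
      using gamma_less_one by (simp add: field_simps)
    ultimately show "\<bar>Vlift b - bellman (\<pi> c) (\<lambda>b''. Vb n (\<phi> b'')) b'\<bar> \<le> ?E + \<gamma> ^ Suc n * Vmax"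
      using Vlift_b' by linarith
  qed
  then show ?case
    by (simp only: c_def)
qed

lemma abs_Vlift_Vbin_le:
  assumes b: "b \<in> B"
  shows "\<bar>Vlift b - Vbin T Ob r \<gamma> B C p \<phi> \<pi> (\<phi> b)\<bar> \<le> LV * \<epsilon> / (1 - \<gamma>)"
proof (rule LIMSEQ_le)
  show "(\<lambda>n. \<bar>Vlift b - Vb n (\<phi> b)\<bar>) \<longlonglongrightarrow> \<bar>Vlift b - Vbin T Ob r \<gamma> B C p \<phi> \<pi> (\<phi> b)\<bar>"
    using b phi_into by (intro tendsto_rabs tendsto_diff tendsto_const Vbin_n_LIMSEQ) auto
  show "(\<lambda>n. LV * \<epsilon> / (1 - \<gamma>) + \<gamma> ^ n * Vmax) \<longlonglongrightarrow> LV * \<epsilon> / (1 - \<gamma>)"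
    using tendsto_add[OF tendsto_const tendsto_mult_right[OF LIMSEQ_power_zero[of \<gamma>]]]
      gamma_nonneg gamma_less_one by simp
  show "\<exists>N. \<forall>n\<ge>N. \<bar>Vlift b - Vb n (\<phi> b)\<bar> \<le> LV * \<epsilon> / (1 - \<gamma>) + \<gamma> ^ n * Vmax"
    using abs_Vlift_Vbin_n_le[OF b] by blast
qed

lemma abs_Vtrue_Vbin_le:
  assumes b: "b \<in> B"
  shows "\<bar>Vtrue T Ob r \<gamma> \<pi> b - Vbin T Ob r \<gamma> B C p \<phi> \<pi> (\<phi> b)\<bar>
    \<le> L\<pi> * \<epsilon> * Vmax / (1 - \<gamma>) + LV * \<epsilon> / (1 - \<gamma>)"
proof -
  have "\<bar>Vtrue T Ob r \<gamma> \<pi> b - Vlift b\<bar> \<le> L\<pi> * \<epsilon> * Vmax / (1 - \<gamma>)"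
    by (rule abs_Vtrue_policy_diff_le[OF pi_dist is_dist_pi_lift l1dist_pi_lift_le b])
  with abs_Vlift_Vbin_le[OF b] show ?thesis
    by linarith
qed

lemma error_bound_le_Lphi:
  "L\<pi> * \<epsilon> * Vmax / (1 - \<gamma>) + LV * \<epsilon> / (1 - \<gamma>)
    \<le> (((L\<pi> + 1) * Rmax + 2 * LV) / (1 - \<gamma>) + (\<gamma> * Rmax * L\<pi> + Rmax) / (1 - \<gamma>)^2) * \<epsilon>"
proof -
  define d where "d = 1 - \<gamma>"
  have "d \<noteq> 0" and \<gamma>: "\<gamma> = 1 - d"
    using gamma_less_one by (simp_all add: d_def)
  then have "(((L\<pi> + 1) * Rmax + 2 * LV) / (1 - \<gamma>) + (\<gamma> * Rmax * L\<pi> + Rmax) / (1 - \<gamma>)^2) * \<epsilon>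
      = L\<pi> * \<epsilon> * Vmax / (1 - \<gamma>) + LV * \<epsilon> / (1 - \<gamma>)
        + ((Rmax + LV) / (1 - \<gamma>) + Rmax / (1 - \<gamma>)^2) * \<epsilon>"
    unfolding Vmax_def d_def[symmetric] unfolding \<gamma> by (simp add: field_simps power2_eq_square)
  moreover have "0 \<le> ((Rmax + LV) / (1 - \<gamma>) + Rmax / (1 - \<gamma>)^2) * \<epsilon>"
    using gamma_less_one eps Rmax_nonneg LV_nonneg by simp
  ultimately show ?thesis
    by linarith
qed

end

theorem theorem2:
  fixes T :: "'s::finite \<Rightarrow> 'a::finite \<Rightarrow> 's \<Rightarrow> real"
    and Ob :: "'s \<Rightarrow> 'o::finite \<Rightarrow> real"
    and r :: "'s \<Rightarrow> 'a \<Rightarrow> real"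
    and b0 :: "'s \<Rightarrow> real"
    and Rmax \<gamma> \<epsilon> L\<pi> LV :: real
    and C :: "('s \<Rightarrow> real) set"
    and \<phi> :: "('s \<Rightarrow> real) \<Rightarrow> ('s \<Rightarrow> real)"
    and p :: "('s \<Rightarrow> real) \<Rightarrow> ('s \<Rightarrow> real) \<Rightarrow> real"
    and \<pi> :: "('s \<Rightarrow> real) \<Rightarrow> 'a \<Rightarrow> real"
  defines "B \<equiv> reach T Ob b0"
  assumes T_dist: "\<And>s a. is_dist (T s a)"
    and Ob_dist: "\<And>s'. is_dist (Ob s')"
    and b0_dist: "is_dist b0"
    and r_bounds: "\<And>s a. 0 \<le> r s a \<and> r s a \<le> Rmax"
    and gamma: "0 \<le> \<gamma>" "\<gamma> < 1"
    and eps: "0 \<le> \<epsilon>"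
    and C_sub: "C \<subseteq> B"
    and phi_into: "\<And>b. b \<in> B \<Longrightarrow> \<phi> b \<in> C"
    and phi_close: "\<And>b. b \<in> B \<Longrightarrow> l1dist (\<phi> b) b \<le> \<epsilon>"
    and phi_bins: "\<And>b1 b2. b1 \<in> B \<Longrightarrow> b2 \<in> B \<Longrightarrow> \<phi> b1 = \<phi> b2 \<Longrightarrow> l1dist b1 b2 \<le> \<epsilon>"
    and p_nonneg: "\<And>c b. c \<in> C \<Longrightarrow> 0 \<le> p c b"
    and p_supp: "\<And>c b. c \<in> C \<Longrightarrow> p c b \<noteq> 0 \<Longrightarrow> b \<in> B \<and> \<phi> b = c"
    and p_sum: "\<And>c. c \<in> C \<Longrightarrow> ((\<lambda>b. p c b) has_sum 1) B"
    and pi_dist: "\<And>b. b \<in> B \<Longrightarrow> is_dist (\<pi> b)"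
    and Lpi_nonneg: "0 \<le> L\<pi>"
    and pi_lip: "\<And>b1 b2. b1 \<in> B \<Longrightarrow> b2 \<in> B \<Longrightarrow> l1dist (\<pi> b1) (\<pi> b2) \<le> L\<pi> * l1dist b1 b2"
    and LV_nonneg: "0 \<le> LV"
    and V_lip: "\<And>b1 b2. b1 \<in> B \<Longrightarrow> b2 \<in> B \<Longrightarrow>
        \<bar>Vtrue T Ob r \<gamma> (\<lambda>b. \<pi> (\<phi> b)) b1 - Vtrue T Ob r \<gamma> (\<lambda>b. \<pi> (\<phi> b)) b2\<bar> \<le> LV * l1dist b1 b2"
  shows "\<forall>b\<in>B. \<bar>Vtrue T Ob r \<gamma> \<pi> b - Vbin T Ob r \<gamma> B C p \<phi> \<pi> (\<phi> b)\<bar>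
           \<le> (((L\<pi> + 1) * Rmax + 2 * LV) / (1 - \<gamma>) + (\<gamma> * Rmax * L\<pi> + Rmax) / (1 - \<gamma>)^2) * \<epsilon>"
proof -
  interpret binned_pomdp T Ob r b0 Rmax \<gamma> \<epsilon> L\<pi> LV C \<phi> p \<pi>
    by unfold_locales (use assms in \<open>simp_all add: B_def\<close>)
  show ?thesis
    unfolding B_def using abs_Vtrue_Vbin_le error_bound_le_Lphi by fastforce
qed

end
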